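(* Let $A=\{\mathbf{a}_1,\dots,\mathbf{a}_n\}\subseteq\mathbb{R}^d$ with hidden partition $\mathcal{V}=\{V_1,\dots,V_K\}$, and let $N_1:=\sum_{\alpha=1}^K\binom{n_\alpha}{2}$, $N_2:=\binom{K+1}{2}$. Let $0<\epsilon<1$, $p>1$, $\delta:=(N_1+N_2)^{-p}$, and let $\Pi\in\mathbb{R}^{m\times d}$ be drawn from a DJL distribution $\mathcal{D}_{\epsilon,\delta}$. Let $E_1$ be the event that $(1-\epsilon)\|\mathbf{a}_i-\mathbf{a}_j\|^2\le\|\Pi(\mathbf{a}_i-\mathbf{a}_j)\|^2\le(1+\epsilon)\|\mathbf{a}_i-\mathbf{a}_j\|^2$ for all $\mathbf{a}_i,\mathbf{a}_j\in V_\alpha$, $1\le\alpha\le K$, and $E_2$ the event that $(1-\epsilon)\|\mathbf{a}^{(\alpha)}-\mathbf{a}^{(\beta)}\|^2\le\|\Pi(\mathbf{a}^{(\alpha)}-\mathbf{a}^{(\beta)})\|^2\le(1+\epsilon)\|\mathbf{a}^{(\alpha)}-\mathbf{a}^{(\beta)}\|^2$ for all $1\le\alpha\ne\beta\le K$. Then $\mathbb{P}[E_2\mid E_1]\ge 1-\frac{N_2}{(N_1+N_2)^p-N_1}$. If moreover $N_2\le n/2$ and $\delta=2/n^{p+1}$ (with $\Pi$ drawn from $\mathcal{D}_{\epsilon,\delta}$ for this $\delta$), then $\mathbb{P}[E_2\mid E_1]\ge 1-\frac{1}{n^p-n+1}$.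
   Context: $\|\cdot\|$ is the Euclidean norm. $I_\alpha:=\{i:\mathbf{a}_i\in V_\alpha\}$, $n_\alpha:=|I_\alpha|$, $\mathbf{a}^{(\alpha)}:=\frac{1}{n_\alpha}\sum_{i\in I_\alpha}\mathbf{a}_i$. For $\epsilon\in(0,1)$, $\delta\in(0,1)$, a DJL distribution $\mathcal{D}_{\epsilon,\delta}$ is a probability distribution over matrices $\Pi\in\mathbb{R}^{m\times d}$ such that for every $z\in\mathbb{R}^d$ with $\|z\|=1$, $\mathbb{P}_{\Pi\sim\mathcal{D}_{\epsilon,\delta}}[\,|\|\Pi z\|^2-1|>\epsilon\,]<\delta$. *)

theory Defs
  imports "HOL-Probability.Probability"
begin

text \<open>Points are indexed by i < n, the hidden partition is given by a labelling
  lab :: nat => nat with lab ` {..<n} = {..<K}; block alpha is V_alpha = {a i | i<n, lab i = alpha}.\<close>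

definition blk :: "(nat \<Rightarrow> nat) \<Rightarrow> nat \<Rightarrow> nat \<Rightarrow> nat set" where
  "blk lab n \<alpha> = {i. i < n \<and> lab i = \<alpha>}"

definition centroid :: "(nat \<Rightarrow> real^'d) \<Rightarrow> (nat \<Rightarrow> nat) \<Rightarrow> nat \<Rightarrow> nat \<Rightarrow> real^'d" where
  "centroid a lab n \<alpha> = (1 / real (card (blk lab n \<alpha>))) *\<^sub>R (\<Sum>i\<in>blk lab n \<alpha>. a i)"

definition N1 :: "(nat \<Rightarrow> nat) \<Rightarrow> nat \<Rightarrow> nat \<Rightarrow> nat" where
  "N1 lab n K = (\<Sum>\<alpha><K. card (blk lab n \<alpha>) choose 2)"

definition N2 :: "nat \<Rightarrow> nat" where
  "N2 K = (K + 1) choose 2"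

definition DJL :: "(real^'d^'m) measure \<Rightarrow> real \<Rightarrow> real \<Rightarrow> bool" where
  "DJL M \<epsilon> \<delta> \<longleftrightarrow> 0 < \<epsilon> \<and> \<epsilon> < 1 \<and> 0 < \<delta> \<and> \<delta> < 1 \<and>
     prob_space M \<and> sets M = sets borel \<and>
     (\<forall>z::real^'d. norm z = 1 \<longrightarrow>
        measure M {P \<in> space M. \<bar>(norm (P *v z))\<^sup>2 - 1\<bar> > \<epsilon>} < \<delta>)"

definition preserves :: "real \<Rightarrow> real^'d^'m \<Rightarrow> real^'d \<Rightarrow> bool" where
  "preserves \<epsilon> P x \<longleftrightarrow> (1 - \<epsilon>) * (norm x)\<^sup>2 \<le> (norm (P *v x))\<^sup>2 \<and>
                          (norm (P *v x))\<^sup>2 \<le> (1 + \<epsilon>) * (norm x)\<^sup>2"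

definition E1 :: "(real^'d^'m) measure \<Rightarrow> real \<Rightarrow> (nat \<Rightarrow> real^'d) \<Rightarrow> (nat \<Rightarrow> nat) \<Rightarrow> nat \<Rightarrow> (real^'d^'m) set" where
  "E1 M \<epsilon> a lab n = {P \<in> space M. \<forall>i<n. \<forall>j<n. lab i = lab j \<longrightarrow> preserves \<epsilon> P (a i - a j)}"

definition E2 :: "(real^'d^'m) measure \<Rightarrow> real \<Rightarrow> (nat \<Rightarrow> real^'d) \<Rightarrow> (nat \<Rightarrow> nat) \<Rightarrow> nat \<Rightarrow> nat \<Rightarrow> (real^'d^'m) set" where
  "E2 M \<epsilon> a lab n K = {P \<in> space M. \<forall>\<alpha><K. \<forall>\<beta><K. \<alpha> \<noteq> \<beta> \<longrightarrow>
       preserves \<epsilon> P (centroid a lab n \<alpha> - centroid a lab n \<beta>)}"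

definition cprob :: "'a measure \<Rightarrow> 'a set \<Rightarrow> 'a set \<Rightarrow> real" where
  "cprob M B A = measure M (A \<inter> B) / measure M A"

end

theory Submission
  imports Defs
begin

text \<open>Each of E1 and E2 asks \<Pi> to preserve the squared norms of finitely many fixed
  vectors: the differences of points in a common block (at most N1 of them up to sign) and
  the differences of centroids (at most N2). By the DJL property and the union bound, E1
  fails with probability at most N1 \<delta> and E2 with probability at most N2 \<delta>, and
  P[E2 | E1] \<ge> 1 - P[not E2] / P[E1] \<ge> 1 - N2 \<delta> / (1 - N1 \<delta>). The two claimed bounds
  are this inequality evaluated at the two choices of \<delta>; for the second one N1 is replaced
  by the count n(n-1)/2 of all pairs and N2 by n/2.\<close>

lemma preserves_0 [simp]: "preserves e P 0"
  unfolding preserves_def by simp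

lemma preserves_scaleR_iff:
  assumes "c \<noteq> 0"
  shows "preserves e P (c *\<^sub>R x) \<longleftrightarrow> preserves e P x"
  using assms
  by (simp add: preserves_def matrix_vector_mult_scaleR power_mult_distrib)

lemma preserves_uminus_iff [simp]: "preserves e P (- x) \<longleftrightarrow> preserves e P x"
  using preserves_scaleR_iff[of "-1" e P x] by simp

lemma preserves_unit_iff:
  assumes "norm z = 1"
  shows "preserves e P z \<longleftrightarrow> \<bar>(norm (P *v z))\<^sup>2 - 1\<bar> \<le> e"
  using assms unfolding preserves_def by (auto simp: abs_le_iff)

lemma sets_not_preserves:
  fixes M :: "(real^'d^'m) measure"
  assumes "sets M = sets borel"
  shows "{P \<in> space M. \<not> preserves e P x} \<in> sets M"
proof -
  have "(\<lambda>P::real^'d^'m. P *v x) \<in> borel_measurable borel"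
    unfolding matrix_vector_mult_def
    by (intro borel_measurable_continuous_onI continuous_intros)
  then have "(\<lambda>P. P *v x) \<in> borel_measurable M"
    using measurable_cong_sets[OF assms refl] by blast
  then show ?thesis
    unfolding preserves_def by measurable
qed

lemma DJL_prob_not_preserves_le:
  fixes M :: "(real^'d^'m) measure"
  assumes "DJL M e d"
  shows "measure M {P \<in> space M. \<not> preserves e P x} \<le> d"
proof (cases "x = 0")
  case True
  then show ?thesis
    using assms by (simp add: DJL_def)
next
  case False
  define z where "z = (1 / norm x) *\<^sub>R x"
  have "norm z = 1"
    using False by (simp add: z_def)
  moreover have "\<not> preserves e P x \<longleftrightarrow> \<bar>(norm (P *v z))\<^sup>2 - 1\<bar> > e" for P
  proof -
    have "preserves e P x \<longleftrightarrow> preserves e P z"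
      using False by (simp add: z_def preserves_scaleR_iff)
    then show ?thesis
      by (simp add: preserves_unit_iff[OF \<open>norm z = 1\<close>] not_le)
  qed
  ultimately have "{P \<in> space M. \<not> preserves e P x} =
                   {P \<in> space M. \<bar>(norm (P *v z))\<^sup>2 - 1\<bar> > e}"
    by blast
  with \<open>norm z = 1\<close> assms show ?thesis
    unfolding DJL_def by auto
qed

definition preservation_event ::
    "(real^'d^'m) measure \<Rightarrow> real \<Rightarrow> 'i set \<Rightarrow> ('i \<Rightarrow> real^'d) \<Rightarrow> (real^'d^'m) set" where
  "preservation_event M e F v = {P \<in> space M. \<forall>k\<in>F. preserves e P (v k)}"

lemma
  fixes M :: "(real^'d^'m) measure"
  assumes "DJL M e d" and "finite F"
  shows sets_preservation_event: "preservation_event M e F v \<in> sets M"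
    and DJL_prob_not_preservation_event_le:
      "measure M (space M - preservation_event M e F v) \<le> real (card F) * d"
proof -
  have sets: "{P \<in> space M. \<not> preserves e P (v k)} \<in> sets M" for k
    using assms(1) sets_not_preserves by (auto simp: DJL_def)
  have event: "preservation_event M e F v =
                space M - (\<Union>k\<in>F. {P \<in> space M. \<not> preserves e P (v k)})"
    by (auto simp: preservation_event_def)
  show "preservation_event M e F v \<in> sets M"
    unfolding event by (intro sets.Diff sets.top sets.finite_UN assms(2) sets)
  have compl: "space M - preservation_event M e F v =
                (\<Union>k\<in>F. {P \<in> space M. \<not> preserves e P (v k)})"
    unfolding event by auto
  have "measure M (space M - preservation_event M e F v)
          \<le> (\<Sum>k\<in>F. measure M {P \<in> space M. \<not> preserves e P (v k)})"
    unfolding compl using assms(2) sets by (intro measure_UNION_le) auto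
  also have "\<dots> \<le> real (card F) * d"
    using sum_bounded_above[of F _ d] DJL_prob_not_preserves_le[OF assms(1)] by simp
  finally show "measure M (space M - preservation_event M e F v) \<le> real (card F) * d" .
qed

lemma cprob_ge_of_compl_bounds:
  assumes "prob_space M" and "A \<in> sets M" "B \<in> sets M"
    and "measure M (space M - A) \<le> c\<^sub>A" "c\<^sub>A < 1"
    and "measure M (space M - B) \<le> c\<^sub>B" "0 \<le> c\<^sub>B"
  shows "cprob M B A \<ge> 1 - c\<^sub>B / (1 - c\<^sub>A)"
proof -
  interpret prob_space M by fact
  have A_ge: "measure M A \<ge> 1 - c\<^sub>A"
    using assms prob_compl by simp
  have "measure M A \<le> measure M ((A \<inter> B) \<union> (space M - B))"
    using assms sets.sets_into_space by (intro finite_measure_mono) auto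
  also have "\<dots> \<le> measure M (A \<inter> B) + measure M (space M - B)"
    using assms by (intro measure_Un_le) auto
  finally have AB_ge: "measure M (A \<inter> B) \<ge> measure M A - measure M (space M - B)"
    by simp
  have "measure M (space M - B) / measure M A \<le> c\<^sub>B / (1 - c\<^sub>A)"
    using assms A_ge by (intro frac_le) auto
  then have "1 - c\<^sub>B / (1 - c\<^sub>A) \<le> (measure M A - measure M (space M - B)) / measure M A"
    using A_ge assms by (simp add: diff_divide_distrib)
  also have "\<dots> \<le> measure M (A \<inter> B) / measure M A"
    using A_ge assms AB_ge by (intro divide_right_mono) auto
  finally show ?thesis
    unfolding cprob_def .
qed

lemma preserves_differences_iff_less_pairs:
  fixes f :: "'i::linorder \<Rightarrow> real^'d"
  assumes "\<And>i j. R i j \<Longrightarrow> R j i"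
  shows "(\<forall>i\<in>A. \<forall>j\<in>A. R i j \<longrightarrow> preserves e P (f i - f j)) \<longleftrightarrow>
         (\<forall>(i, j)\<in>{(i, j) \<in> A \<times> A. i < j \<and> R i j}. preserves e P (f i - f j))"
proof -
  have "preserves e P (f i - f j)"
    if "\<forall>(i, j)\<in>{(i, j) \<in> A \<times> A. i < j \<and> R i j}. preserves e P (f i - f j)"
      and "i \<in> A" "j \<in> A" "R i j" for i j
    using that assms[of i j] preserves_uminus_iff[of e P "f j - f i"]
    by (cases i j rule: linorder_cases) auto
  then show ?thesis
    by auto
qed

lemma E1_eq_preservation_event:
  "E1 M e a lab n =
     preservation_event M e {(i, j) \<in> {..<n} \<times> {..<n}. i < j \<and> lab i = lab j} (\<lambda>(i, j). a i - a j)"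
  using preserves_differences_iff_less_pairs[of "\<lambda>i j. lab i = lab j" "{..<n}" e _ a]
  unfolding E1_def preservation_event_def by (auto simp: case_prod_beta)

lemma E2_eq_preservation_event:
  "E2 M e a lab n K =
     preservation_event M e {(\<alpha>, \<beta>) \<in> {..<K} \<times> {..<K}. \<alpha> < \<beta>}
       (\<lambda>(\<alpha>, \<beta>). centroid a lab n \<alpha> - centroid a lab n \<beta>)"
  using preserves_differences_iff_less_pairs[of "(\<noteq>)" "{..<K}" e _ "centroid a lab n"]
  unfolding E2_def preservation_event_def by (auto simp: case_prod_beta)

lemma card_less_pairs:
  fixes A :: "'a::linorder set"
  assumes "finite A"
  shows "card {(i, j) \<in> A \<times> A. i < j} = card A choose 2"
proof -
  have "bij_betw (\<lambda>(i, j). {i, j}) {(i, j) \<in> A \<times> A. i < j} {B. B \<subseteq> A \<and> card B = 2}"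
  proof (rule bij_betwI')
    fix x y
    assume "x \<in> {(i, j) \<in> A \<times> A. i < j}" "y \<in> {(i, j) \<in> A \<times> A. i < j}"
    then show "((\<lambda>(i, j). {i, j}) x = (\<lambda>(i, j). {i, j}) y) = (x = y)"
      by (auto simp: doubleton_eq_iff)
  next
    fix x
    assume "x \<in> {(i, j) \<in> A \<times> A. i < j}"
    then show "(\<lambda>(i, j). {i, j}) x \<in> {B. B \<subseteq> A \<and> card B = 2}"
      by auto
  next
    fix B
    assume "B \<in> {B. B \<subseteq> A \<and> card B = 2}"
    then obtain i j where "B = {i, j}" "i \<noteq> j" "i \<in> A" "j \<in> A"
      by (auto simp: card_2_iff)
    then have "(min i j, max i j) \<in> {(i, j) \<in> A \<times> A. i < j}"
      and "B = (\<lambda>(i, j). {i, j}) (min i j, max i j)"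
      by (auto simp: min_def max_def)
    then show "\<exists>x\<in>{(i, j) \<in> A \<times> A. i < j}. B = (\<lambda>(i, j). {i, j}) x"
      by blast
  qed
  then show ?thesis
    using n_subsets[OF assms, of 2] by (simp add: bij_betw_same_card)
qed

lemma finite_less_pairs: "finite A \<Longrightarrow> finite {(i, j) \<in> A \<times> A. i < j}"
  by (rule finite_subset[of _ "A \<times> A"]) auto

lemma card_same_label_pairs_le_N1:
  assumes "lab ` {..<n} \<subseteq> {..<K}"
  shows "card {(i, j) \<in> {..<n} \<times> {..<n}. i < j \<and> lab i = lab j} \<le> N1 lab n K"
proof -
  have finite_blk: "finite (blk lab n \<alpha>)" for \<alpha>
    by (simp add: blk_def)
  have "{(i, j) \<in> {..<n} \<times> {..<n}. i < j \<and> lab i = lab j}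
        \<subseteq> (\<Union>\<alpha><K. {(i, j) \<in> blk lab n \<alpha> \<times> blk lab n \<alpha>. i < j})"
    using assms by (fastforce simp: blk_def)
  then have "card {(i, j) \<in> {..<n} \<times> {..<n}. i < j \<and> lab i = lab j}
             \<le> card (\<Union>\<alpha><K. {(i, j) \<in> blk lab n \<alpha> \<times> blk lab n \<alpha>. i < j})"
    using finite_blk by (intro card_mono finite_UN_I finite_less_pairs) auto
  also have "\<dots> \<le> (\<Sum>\<alpha><K. card {(i, j) \<in> blk lab n \<alpha> \<times> blk lab n \<alpha>. i < j})"
    by (rule card_UN_le) simp
  also have "\<dots> = N1 lab n K"
    unfolding N1_def using card_less_pairs[OF finite_blk] by simp
  finally show ?thesis .
qed

lemma card_same_label_pairs_le_choose_2:
  "card {(i, j) \<in> {..<n} \<times> {..<n}. i < j \<and> lab i = lab j} \<le> n choose 2"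
proof -
  have "card {(i, j) \<in> {..<n} \<times> {..<n}. i < j \<and> lab i = lab j}
        \<le> card {(i, j) \<in> {..<n} \<times> {..<n}. i < j}"
    by (intro card_mono finite_less_pairs) auto
  then show ?thesis
    using card_less_pairs[of "{..<n}"] by simp
qed

lemma of_nat_choose_2: "real (n choose 2) = real n * (real n - 1) / 2"
proof (induction n)
  case (Suc n)
  have "Suc n choose 2 = n + (n choose 2)"
    by (simp add: numeral_2_eq_2)
  with Suc show ?case
    by (simp add: field_simps)
qed simp

lemma choose_2_le_N2: "K choose 2 \<le> N2 K"
  unfolding N2_def by (simp add: numeral_2_eq_2)

lemma cprob_E2_E1_ge:
  fixes M :: "(real^'d^'m) measure"
  assumes DJL: "DJL M e d"
    and c\<^sub>1: "real (card {(i, j) \<in> {..<n} \<times> {..<n}. i < j \<and> lab i = lab j}) \<le> c\<^sub>1"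
    and c\<^sub>2: "real (K choose 2) \<le> c\<^sub>2"
    and "c\<^sub>1 * d < 1"
  shows "cprob M (E2 M e a lab n K) (E1 M e a lab n) \<ge> 1 - c\<^sub>2 * d / (1 - c\<^sub>1 * d)"
proof -
  let ?S\<^sub>1 = "{(i, j) \<in> {..<n} \<times> {..<n}. i < j \<and> lab i = lab j}"
    and ?S\<^sub>2 = "{(\<alpha>, \<beta>) \<in> {..<K} \<times> {..<K}. \<alpha> < \<beta>}"
    and ?v\<^sub>1 = "\<lambda>(i, j). a i - a j"
    and ?v\<^sub>2 = "\<lambda>(\<alpha>, \<beta>). centroid a lab n \<alpha> - centroid a lab n \<beta>"
  have "0 < d" "prob_space M"
    using DJL by (auto simp: DJL_def)
  have "finite ?S\<^sub>1"
    by (rule finite_subset[of _ "{..<n} \<times> {..<n}"]) auto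
  have "measure M (space M - preservation_event M e ?S\<^sub>1 ?v\<^sub>1) \<le> real (card ?S\<^sub>1) * d"
    using DJL_prob_not_preservation_event_le[OF DJL \<open>finite ?S\<^sub>1\<close>] .
  also have "\<dots> \<le> c\<^sub>1 * d"
    using c\<^sub>1 \<open>0 < d\<close> by (intro mult_right_mono) auto
  finally have bound\<^sub>1: "measure M (space M - preservation_event M e ?S\<^sub>1 ?v\<^sub>1) \<le> c\<^sub>1 * d" .
  have "measure M (space M - preservation_event M e ?S\<^sub>2 ?v\<^sub>2) \<le> real (card ?S\<^sub>2) * d"
    by (rule DJL_prob_not_preservation_event_le[OF DJL finite_less_pairs]) simp
  also have "\<dots> \<le> c\<^sub>2 * d"
    using c\<^sub>2 \<open>0 < d\<close> card_less_pairs[of "{..<K}"] by (intro mult_right_mono) auto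
  finally have bound\<^sub>2: "measure M (space M - preservation_event M e ?S\<^sub>2 ?v\<^sub>2) \<le> c\<^sub>2 * d" .
  have "0 \<le> c\<^sub>2 * d"
    using c\<^sub>2 \<open>0 < d\<close> of_nat_0_le_iff[of "K choose 2"] by (intro mult_nonneg_nonneg) linarith+
  then show ?thesis
    unfolding E1_eq_preservation_event E2_eq_preservation_event
    using \<open>prob_space M\<close> \<open>finite ?S\<^sub>1\<close> bound\<^sub>1 bound\<^sub>2 \<open>c\<^sub>1 * d < 1\<close>
    by (intro cprob_ge_of_compl_bounds sets_preservation_event[OF DJL] finite_less_pairs) auto
qed

lemma self_le_powr:
  fixes x p :: real
  assumes "1 \<le> x" "1 \<le> p"
  shows "x \<le> x powr p"
  using powr_mono[OF assms(2,1)] assms(1) by simp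

lemma cprob_E2_E1_ge_N1_N2:
  fixes M :: "(real^'d^'m) measure"
  assumes labels: "lab ` {..<n} \<subseteq> {..<K}" and "1 < p"
    and DJL: "DJL M e (real (N1 lab n K + N2 K) powr (- p))"
  shows "cprob M (E2 M e a lab n K) (E1 M e a lab n)
           \<ge> 1 - real (N2 K) / (real (N1 lab n K + N2 K) powr p - real (N1 lab n K))"
proof -
  define S where "S = real (N1 lab n K + N2 K) powr p"
  define d where "d = real (N1 lab n K + N2 K) powr (- p)"
  have "d = 1 / S"
    unfolding S_def d_def by (rule powr_minus_divide)
  have "N1 lab n K + N2 K \<noteq> 0"
    using DJL by (auto simp: DJL_def)
  then have "K \<noteq> 0"
    by (auto simp: N1_def N2_def)
  then have "1 \<le> N2 K"
    unfolding N2_def by (simp add: Suc_leI)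
  then have "real (N1 lab n K) < S"
    unfolding S_def using self_le_powr[of "real (N1 lab n K + N2 K)" p] \<open>1 < p\<close> by simp
  then have "real (N1 lab n K) * d < 1" and
    ratio: "real (N2 K) * d / (1 - real (N1 lab n K) * d) = real (N2 K) / (S - real (N1 lab n K))"
    using of_nat_0_le_iff[of "N1 lab n K"] unfolding \<open>d = 1 / S\<close>
    by (simp_all add: field_simps)
  have "cprob M (E2 M e a lab n K) (E1 M e a lab n)
          \<ge> 1 - real (N2 K) * d / (1 - real (N1 lab n K) * d)"
  proof (rule cprob_E2_E1_ge[OF DJL[folded d_def]])
    show "real (card {(i, j) \<in> {..<n} \<times> {..<n}. i < j \<and> lab i = lab j})
            \<le> real (N1 lab n K)"
      using card_same_label_pairs_le_N1[OF labels] by simp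
    show "real (K choose 2) \<le> real (N2 K)"
      using choose_2_le_N2 by simp
  qed fact
  then show ?thesis
    unfolding ratio S_def .
qed

lemma cprob_E2_E1_ge_n:
  fixes M :: "(real^'d^'m) measure"
  assumes "1 < p" and N2_le: "real (N2 K) \<le> real n / 2"
    and DJL: "DJL M e (2 / real n powr (p + 1))"
  shows "cprob M (E2 M e a lab n K) (E1 M e a lab n) \<ge> 1 - 1 / (real n powr p - real n + 1)"
proof -
  define S where "S = real n powr p"
  define d where "d = 2 / real n powr (p + 1)"
  have "n \<noteq> 0"
    using DJL by (auto simp: DJL_def)
  then have "real n \<le> S"
    unfolding S_def using self_le_powr[of "real n" p] \<open>1 < p\<close> by simp
  have "d = 2 / (S * real n)"
    unfolding S_def d_def using \<open>n \<noteq> 0\<close> by (simp add: powr_add)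
  then have c\<^sub>1d: "real n * (real n - 1) / 2 * d = (real n - 1) / S"
    and c\<^sub>2d: "real n / 2 * d = 1 / S"
    using \<open>n \<noteq> 0\<close> \<open>real n \<le> S\<close> by (simp_all add: field_simps)
  have "real n * (real n - 1) / 2 * d < 1" and
    ratio: "real n / 2 * d / (1 - real n * (real n - 1) / 2 * d) = 1 / (S - real n + 1)"
    unfolding c\<^sub>1d c\<^sub>2d using \<open>n \<noteq> 0\<close> \<open>real n \<le> S\<close> by (simp_all add: field_simps)
  have "cprob M (E2 M e a lab n K) (E1 M e a lab n)
          \<ge> 1 - real n / 2 * d / (1 - real n * (real n - 1) / 2 * d)"
  proof (rule cprob_E2_E1_ge[OF DJL[folded d_def]])
    show "real (card {(i, j) \<in> {..<n} \<times> {..<n}. i < j \<and> lab i = lab j})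
            \<le> real n * (real n - 1) / 2"
      unfolding of_nat_choose_2[symmetric] using card_same_label_pairs_le_choose_2 by simp
    show "real (K choose 2) \<le> real n / 2"
      using choose_2_le_N2[of K] N2_le by linarith
  qed fact
  then show ?thesis
    unfolding ratio S_def .
qed

theorem proposition7:
  fixes a :: "nat \<Rightarrow> real^'d" and lab :: "nat \<Rightarrow> nat" and n K :: nat
    and \<epsilon> p :: real
  assumes inj: "inj_on a {..<n}"
    and part: "lab ` {..<n} = {..<K}"
    and eps: "0 < \<epsilon>" "\<epsilon> < 1"
    and p: "p > 1"
  shows "(\<forall>M :: (real^'d^'m) measure.
            DJL M \<epsilon> ((real (N1 lab n K + N2 K)) powr (- p)) \<longrightarrow>
            cprob M (E2 M \<epsilon> a lab n K) (E1 M \<epsilon> a lab n)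
              \<ge> 1 - real (N2 K) / ((real (N1 lab n K + N2 K)) powr p - real (N1 lab n K)))
         \<and> (real (N2 K) \<le> real n / 2 \<longrightarrow>
            (\<forall>M :: (real^'d^'m) measure.
              DJL M \<epsilon> (2 / (real n) powr (p + 1)) \<longrightarrow>
              cprob M (E2 M \<epsilon> a lab n K) (E1 M \<epsilon> a lab n)
                \<ge> 1 - 1 / ((real n) powr p - real n + 1)))"
proof (intro conjI allI impI)
  fix M :: "(real^'d^'m) measure"
  assume "DJL M \<epsilon> ((real (N1 lab n K + N2 K)) powr (- p))"
  then show "cprob M (E2 M \<epsilon> a lab n K) (E1 M \<epsilon> a lab n)
               \<ge> 1 - real (N2 K) / ((real (N1 lab n K + N2 K)) powr p - real (N1 lab n K))"
    using part p by (intro cprob_E2_E1_ge_N1_N2) auto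
next
  fix M :: "(real^'d^'m) measure"
  assume "real (N2 K) \<le> real n / 2" and "DJL M \<epsilon> (2 / (real n) powr (p + 1))"
  then show "cprob M (E2 M \<epsilon> a lab n K) (E1 M \<epsilon> a lab n)
               \<ge> 1 - 1 / ((real n) powr p - real n + 1)"
    by (rule cprob_E2_E1_ge_n[OF p])
qed

end
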